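(* Let $a>0$, $b\ge0$, $\eta>0$, $\alpha>0$. Let $(r_t)_{t\ge0}$ be real numbers with $r_{t+1}\le r_t-\alpha\frac a2r_t^2+\alpha\frac b\eta$, define $\rho_0=r_0$, $\rho_{t+1}=\rho_t-\alpha\frac a2\rho_t^2+\alpha\frac b\eta$, let $\bar\rho=\sqrt{\frac{2b}{\eta a}}$, and define $\nu_0=\rho_0$, $\nu_{t+1}=\big(1-\alpha\frac a2\bar\rho\big)\nu_t+\alpha\frac b\eta$ for $t\ge0$. If $r_0\ge\bar\rho$ and $\alpha\le\frac{1}{a\,r_0}$, then $\nu_t\ge\rho_t$ for all $t\ge0$. *)

theory Defs
  imports Complex_Main
begin

end

theory Submission
  imports Defs
begin

text \<open>With \<open>c = \<alpha> a / 2\<close> and \<open>s = sqrt (2 b / (\<eta> a))\<close> one has \<open>\<alpha> b / \<eta> = c s\<^sup>2\<close>, and the two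
  recursions become \<open>\<rho>' - s = (\<rho> - s) (1 - c (\<rho> + s))\<close> and \<open>\<nu>' - s = (\<nu> - s) (1 - c s)\<close>.
  As long as \<open>s \<le> \<rho> \<le> \<rho>\<^sub>0\<close>, the step size condition \<open>2 c \<rho>\<^sub>0 \<le> 1\<close> puts the factor
  \<open>1 - c (\<rho> + s)\<close> in \<open>[0, 1 - c s]\<close>, so \<open>\<rho>\<close> decreases towards \<open>s\<close> without overshooting
  and its distance to \<open>s\<close> contracts faster than that of \<open>\<nu>\<close>.\<close>

lemma logistic_step_minus_fixpoint:
  fixes c s x :: "'a :: comm_ring_1"
  shows "(x - c * x\<^sup>2 + c * s\<^sup>2) - s = (x - s) * (1 - c * (x + s))"
  by (simp add: algebra_simps power2_eq_square)

lemma affine_step_minus_fixpoint: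
  fixes c s y :: "'a :: comm_ring_1"
  shows "((1 - c * s) * y + c * s\<^sup>2) - s = (y - s) * (1 - c * s)"
  by (simp add: algebra_simps power2_eq_square)

lemma logistic_step_bounds:
  fixes c s x :: real
  assumes "c \<ge> 0" and "s \<ge> 0" and "s \<le> x" and "c * (x + s) \<le> 1"
  shows "s \<le> x - c * x\<^sup>2 + c * s\<^sup>2" and "x - c * x\<^sup>2 + c * s\<^sup>2 \<le> x"
proof -
  have "0 \<le> 1 - c * (x + s)" and "1 - c * (x + s) \<le> 1"
    using assms by (simp_all add: mult_nonneg_nonneg)
  then have "0 \<le> (x - s) * (1 - c * (x + s))" and "(x - s) * (1 - c * (x + s)) \<le> x - s"
    using \<open>s \<le> x\<close> by (simp_all add: mult_left_le)
  then show "s \<le> x - c * x\<^sup>2 + c * s\<^sup>2" and "x - c * x\<^sup>2 + c * s\<^sup>2 \<le> x"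
    using logistic_step_minus_fixpoint[of x c s] by linarith+
qed

lemma logistic_step_le_affine_step:
  fixes c s x y :: real
  assumes "c \<ge> 0" and "s \<ge> 0" and "s \<le> x" and "x \<le> y" and "c * (x + s) \<le> 1"
  shows "x - c * x\<^sup>2 + c * s\<^sup>2 \<le> (1 - c * s) * y + c * s\<^sup>2"
proof -
  have "c * x \<ge> 0" using assms(1-3) by simp
  then have contract: "1 - c * (x + s) \<le> 1 - c * s" and nonneg: "0 \<le> 1 - c * s"
    using assms(5) by (simp_all add: distrib_left)
  have "(x - s) * (1 - c * (x + s)) \<le> (x - s) * (1 - c * s)"
    using contract \<open>s \<le> x\<close> by (intro mult_left_mono) auto
  also have "\<dots> \<le> (y - s) * (1 - c * s)"
    using nonneg \<open>x \<le> y\<close> by (intro mult_right_mono) auto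
  finally show ?thesis
    using logistic_step_minus_fixpoint[of x c s] affine_step_minus_fixpoint[of c s y] by linarith
qed

lemma logistic_recursion_le_affine_recursion:
  fixes c s :: real and \<rho> \<nu> :: "nat \<Rightarrow> real"
  assumes "c \<ge> 0" and "s \<ge> 0" and "s \<le> \<rho> 0" and "\<rho> 0 \<le> \<nu> 0" and "2 * c * \<rho> 0 \<le> 1"
    and \<rho>_Suc: "\<And>t. \<rho> (Suc t) = \<rho> t - c * (\<rho> t)\<^sup>2 + c * s\<^sup>2"
    and \<nu>_Suc: "\<And>t. \<nu> (Suc t) = (1 - c * s) * \<nu> t + c * s\<^sup>2"
  shows "\<rho> t \<le> \<nu> t"
proof -
  have "s \<le> \<rho> t \<and> \<rho> t \<le> \<rho> 0 \<and> \<rho> t \<le> \<nu> t" for t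
  proof (induction t)
    case 0
    then show ?case using assms(3,4) by simp
  next
    case (Suc t)
    then have "s \<le> \<rho> t" "\<rho> t \<le> \<rho> 0" "\<rho> t \<le> \<nu> t" by auto
    moreover have "c * (\<rho> t + s) \<le> 1"
    proof -
      have "c * (\<rho> t + s) \<le> c * (2 * \<rho> 0)"
        using \<open>c \<ge> 0\<close> \<open>\<rho> t \<le> \<rho> 0\<close> \<open>s \<le> \<rho> 0\<close> by (intro mult_left_mono) auto
      then show ?thesis using assms(5) by simp
    qed
    ultimately show ?case
      using logistic_step_bounds[of c s "\<rho> t"] logistic_step_le_affine_step[of c s "\<rho> t" "\<nu> t"]
        assms(1,2) \<rho>_Suc[of t] \<nu>_Suc[of t] by auto
  qed
  then show ?thesis by blast
qed

theorem lemmaC9: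
  fixes a b \<eta> \<alpha> :: real and r \<rho> \<nu> :: "nat \<Rightarrow> real"
  assumes "a > 0" and "b \<ge> 0" and "\<eta> > 0" and "\<alpha> > 0"
    and "\<And>t. r (Suc t) \<le> r t - \<alpha> * (a / 2) * (r t)^2 + \<alpha> * (b / \<eta>)"
    and "\<rho> 0 = r 0"
    and "\<And>t. \<rho> (Suc t) = \<rho> t - \<alpha> * (a / 2) * (\<rho> t)^2 + \<alpha> * (b / \<eta>)"
    and "\<nu> 0 = \<rho> 0"
    and "\<And>t. \<nu> (Suc t) = (1 - \<alpha> * (a / 2) * sqrt (2 * b / (\<eta> * a))) * \<nu> t + \<alpha> * (b / \<eta>)"
    and "r 0 \<ge> sqrt (2 * b / (\<eta> * a))"
    and "\<alpha> \<le> 1 / (a * r 0)"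
  shows "\<forall>t. \<nu> t \<ge> \<rho> t"
proof
  fix t
  define s where "s = sqrt (2 * b / (\<eta> * a))"
  define c where "c = \<alpha> * (a / 2)"
  have "s \<ge> 0" and "c \<ge> 0" using assms(1-4) by (simp_all add: s_def c_def)
  have drift: "\<alpha> * (b / \<eta>) = c * s\<^sup>2"
    using assms(1-3) by (simp add: s_def c_def field_simps)
  \<comment> \<open>\<open>r 0 = 0\<close> would make \<open>1 / (a * r 0) = 0\<close>, contradicting \<open>\<alpha> > 0\<close>.\<close>
  have "r 0 \<ge> 0" using assms(10) \<open>s \<ge> 0\<close> s_def by linarith
  moreover have "r 0 \<noteq> 0" using assms(4,11) by auto
  ultimately have "r 0 > 0" by simp
  then have "2 * c * \<rho> 0 \<le> 1"
    using assms(1,6,11) by (simp add: c_def field_simps)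
  then show "\<rho> t \<le> \<nu> t"
    using logistic_recursion_le_affine_recursion[of c s \<rho> \<nu>] \<open>s \<ge> 0\<close> \<open>c \<ge> 0\<close>
      assms(6-10) drift by (simp add: s_def c_def)
qed

end
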